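(* Let $\lambda=(\lambda^n_{s,h})_{n\in N,\,s\in S,\,h\in H}\in\mathbb{R}^{|S|\times|H|\times|N|}$ be any deterministic price decomposition process, and suppose the weekly uncertainties $(W_{s})_{s\in S}$ are weekly independent (the joint law of $(W_{s_0},\dots,W_{\bar s})$, together with any initial noise, is the product of the marginal laws). Then, for every initial state $x_0=(x_0^n)_{n\in N}\in\prod_{n\in N}X^n_{s_0}$, $$\sum_{n\in N} V^n_{s_0}[\lambda^n](x_0^n)+V^{A}[\lambda]\;\le\; V_{s_0}(x_0),$$ where $V_{s_0}(x_0)$ is the initial global cost-to-go (which, under weekly independence, equals the optimal value of the global multistage problem started at $x_0$).
   Context: Setting. Weeks form a finite totally ordered set $S=\{s_0\prec\dots\prec\bar s\}$, with successor $s^+$ and an extra terminal week $s_{\mathrm{last}}=\bar s^+$; hours form a finite ordered set $H$. The system is a directed graph $(N,A)$ with node–arc incidence matrix $B\in\{-1,0,1\}^{N\times A}$ ($B_{n,a}=1$ if arc $a$ leaves $n$, $-1$ if it enters $n$, $0$ otherwise). For node $n$ and week $s$: the state $x^n_s\in X^n_s$ is the storage level at the first hour of week $s$; $W^n_s$ is the (random) vector of hourly uncertainties of week $s$ at node $n$ with values in a measurable space; $u^n_s$ is the vector of hourly recourse controls of week $s$; $f^n_s\in\mathbb{R}^{|H|}$ is the vector of hourly nodal import/export flows; for arc $a$, $q^a_s\in\mathbb{R}^{|H|}$ is the vector of hourly arc flows. Write $W_s=(W^n_s)_{n\in N}$, $f_s=(f^n_s)_n$, $q_s=(q^a_s)_a$.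 Given are measurable weekly dynamics $x^n_{s^+}=g^n_s(x^n_s,w^n_s,u^n_s)$, weekly nodal balance functions with constraint $b^n_s(w^n_s,u^n_s)=f^n_s$, box constraints on the hourly storage levels within the week (obtained by composing hourly dynamics) and on the hourly controls, weekly nodal costs $L^n_s(x^n_s,w^n_s,u^n_s)\in\mathbb{R}\cup\{+\infty\}$, weekly arc costs $L^a_s(q^a_s)\in\mathbb{R}\cup\{+\infty\}$, and final costs $K^n$. Decisions of week $s'$ taken from week $s$ onwards must be measurable with respect to $\sigma(W_s,\dots,W_{s'})$ (weekly hazard–decision information). For the price, $\langle\lambda_s,f_s-Bq_s\rangle=\sum_{h\in H}\lambda_{s,h}^{\top}(f_{s,h}-Bq_{s,h})$ and $\langle\lambda^n_s,f^n_s\rangle=\sum_{h}\lambda^n_{s,h}f^n_{s,h}$. Global cost-to-go: $V_s(x)=\min\mathbb{E}\big[\sum_{s'=s}^{\bar s}\big(\sum_{n}L^n_{s'}(X^n_{s'},W^n_{s'},U^n_{s'})+\sum_a L^a_{s'}(Q^a_{s'})\big)+\sum_n K^n(X^n_{s_{\mathrm{last}}})\big]$ over processes $(U,F,Q)$ subject to $X_s=x$, the dynamics, balance, box constraints at each node, the information constraints, and the coupling $F_{s'}-BQ_{s'}=0$ for all $s'\in[s,\bar s]$. Nodal price cost-to-go: $V^n_s[\lambda^n](x^n)=\min\mathbb{E}\big[\sum_{s'=s}^{\bar s}\big(L^n_{s'}(X^n_{s'},W^n_{s'},U^n_{s'})+\langle\lambda^n_{s'},F^n_{s'}\rangle\big)+K^n(X^n_{s_{\mathrm{last}}})\big]$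 over $(U^n,F^n)$ subject to $X^n_s=x^n$, the nodal dynamics, balance, box constraints and information constraints. Arc price value function: $V^A[\lambda]=\min_{q}\big[\sum_{a\in A}\sum_{s\in S}L^a_s(q^a_s)-\langle B^\top\lambda,q\rangle\big]$ over deterministic arc flows $q$ (equivalently over adapted random arc flows in expectation). *)

theory Defs
  imports "HOL-Probability.Probability"
begin

text \<open>
 Weeks are S = {0..<T} (s0 = 0, s_last = T). Hours, nodes and arcs are finite types
 'h, 'n, 'a.
 Noise W t n :: 'omega => 'w (week t, node n), with measurable space Wm t n.
\<close>

definition incidence :: "('a \<Rightarrow> 'n) \<Rightarrow> ('a \<Rightarrow> 'n) \<Rightarrow> 'n \<Rightarrow> 'a \<Rightarrow> real" where
  "incidence src tgt n a = (if src a = n then 1 else if tgt a = n then -1 else 0)"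

definition hpair :: "('h::finite \<Rightarrow> real) \<Rightarrow> ('h \<Rightarrow> real) \<Rightarrow> real" where
  "hpair l f = (\<Sum>h\<in>UNIV. l h * f h)"

definition info :: "'o measure \<Rightarrow> (nat \<Rightarrow> 'n \<Rightarrow> 'w measure) \<Rightarrow> (nat \<Rightarrow> 'n \<Rightarrow> 'o \<Rightarrow> 'w)
    \<Rightarrow> nat \<Rightarrow> nat \<Rightarrow> 'o measure" where
  "info M Wm W s t = sigma (space M)
     (\<Union>r\<in>{s..t}. \<Union>n. {W r n -` A \<inter> space M | A. A \<in> sets (Wm r n)})"

text \<open>State trajectory of one node started at week s in state x: ntraj ... k = X_{s+k}.\<close>
primrec ntraj :: "(nat \<Rightarrow> real \<Rightarrow> 'w \<Rightarrow> 'u \<Rightarrow> real) \<Rightarrow> nat \<Rightarrow> real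
    \<Rightarrow> (nat \<Rightarrow> 'o \<Rightarrow> 'w) \<Rightarrow> (nat \<Rightarrow> 'o \<Rightarrow> 'u) \<Rightarrow> nat \<Rightarrow> 'o \<Rightarrow> real" where
  "ntraj g s x W U 0 \<omega> = x"
| "ntraj g s x W U (Suc k) \<omega> =
     g (s + k) (ntraj g s x W U k \<omega>) (W (s + k) \<omega>) (U (s + k) \<omega>)"

definition cost_int :: "'o measure \<Rightarrow> ('o \<Rightarrow> ereal) \<Rightarrow> bool" where
  "cost_int M X \<longleftrightarrow> X \<in> borel_measurable M \<and> (AE \<omega> in M. X \<omega> \<noteq> \<infinity>)
      \<and> integrable M (\<lambda>\<omega>. real_of_ereal (X \<omega>))"

definition node_adm ::
  "'o measure \<Rightarrow> (nat \<Rightarrow> 'n \<Rightarrow> 'w measure) \<Rightarrow> (nat \<Rightarrow> 'n \<Rightarrow> 'o \<Rightarrow> 'w) \<Rightarrow> 'c measure \<Rightarrow> nat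
   \<Rightarrow> ('n \<Rightarrow> nat \<Rightarrow> real set)
   \<Rightarrow> ('n \<Rightarrow> nat \<Rightarrow> real \<Rightarrow> 'w \<Rightarrow> ('h::finite \<Rightarrow> 'c::order) \<Rightarrow> real)
   \<Rightarrow> ('n \<Rightarrow> nat \<Rightarrow> real \<Rightarrow> 'w \<Rightarrow> ('h \<Rightarrow> 'c) \<Rightarrow> 'h \<Rightarrow> real)
   \<Rightarrow> ('n \<Rightarrow> nat \<Rightarrow> 'h \<Rightarrow> real) \<Rightarrow> ('n \<Rightarrow> nat \<Rightarrow> 'h \<Rightarrow> real)
   \<Rightarrow> ('n \<Rightarrow> nat \<Rightarrow> 'h \<Rightarrow> 'c) \<Rightarrow> ('n \<Rightarrow> nat \<Rightarrow> 'h \<Rightarrow> 'c)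
   \<Rightarrow> ('n \<Rightarrow> nat \<Rightarrow> 'w \<Rightarrow> ('h \<Rightarrow> 'c) \<Rightarrow> 'h \<Rightarrow> real)
   \<Rightarrow> ('n \<Rightarrow> nat \<Rightarrow> real \<Rightarrow> 'w \<Rightarrow> ('h \<Rightarrow> 'c) \<Rightarrow> ereal) \<Rightarrow> ('n \<Rightarrow> real \<Rightarrow> ereal)
   \<Rightarrow> 'n \<Rightarrow> nat \<Rightarrow> real \<Rightarrow> (nat \<Rightarrow> 'o \<Rightarrow> 'h \<Rightarrow> 'c) \<Rightarrow> (nat \<Rightarrow> 'o \<Rightarrow> 'h \<Rightarrow> real) \<Rightarrow> bool" where
  "node_adm M Wm W Cm T Xs g lev xlo xhi ulo uhi b L K n s x U F \<longleftrightarrow>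
     (let X = (\<lambda>t \<omega>. ntraj (g n) s x (\<lambda>r. W r n) U (t - s) \<omega>) in
      (\<forall>t\<in>{s..<T}. \<forall>h.
          (\<lambda>\<omega>. U t \<omega> h) \<in> measurable (info M Wm W s t) Cm
        \<and> (\<lambda>\<omega>. F t \<omega> h) \<in> borel_measurable (info M Wm W s t))
    \<and> (AE \<omega> in M.
          (\<forall>t\<in>{s..T}. X t \<omega> \<in> Xs n t)
        \<and> (\<forall>t\<in>{s..<T}. b n t (W t n \<omega>) (U t \<omega>) = F t \<omega>
             \<and> (\<forall>h. xlo n t h \<le> lev n t (X t \<omega>) (W t n \<omega>) (U t \<omega>) h
                    \<and> lev n t (X t \<omega>) (W t n \<omega>) (U t \<omega>) h \<le> xhi n t h
                    \<and> ulo n t h \<le> U t \<omega> h \<and> U t \<omega> h \<le> uhi n t h)))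
    \<and> (\<forall>t\<in>{s..<T}. cost_int M (\<lambda>\<omega>. L n t (X t \<omega>) (W t n \<omega>) (U t \<omega>))
        \<and> (\<forall>h. integrable M (\<lambda>\<omega>. F t \<omega> h)))
    \<and> cost_int M (\<lambda>\<omega>. K n (X T \<omega>)))"

definition Vnode where
  "Vnode M Wm W Cm T Xs g lev xlo xhi ulo uhi b L K n (lam :: nat \<Rightarrow> 'h::finite \<Rightarrow> real) s x =
     (INF UF \<in> {(U, F). node_adm M Wm W Cm T Xs g lev xlo xhi ulo uhi b L K n s x U F}.
        ereal (\<integral>\<omega>. (\<Sum>t\<in>{s..<T}.
             real_of_ereal (L n t (ntraj (g n) s x (\<lambda>r. W r n) (fst UF) (t - s) \<omega>) (W t n \<omega>) (fst UF t \<omega>))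
             + hpair (lam t) (snd UF t \<omega>))
          + real_of_ereal (K n (ntraj (g n) s x (\<lambda>r. W r n) (fst UF) (T - s) \<omega>)) \<partial>M))"

definition glob_adm where
  "glob_adm M Wm W Cm T Xs g lev xlo xhi ulo uhi b L K (La :: 'a \<Rightarrow> nat \<Rightarrow> ('h::finite \<Rightarrow> real) \<Rightarrow> ereal)
      (B :: 'n \<Rightarrow> 'a \<Rightarrow> real) s x U F Q \<longleftrightarrow>
     (\<forall>n. node_adm M Wm W Cm T Xs g lev xlo xhi ulo uhi b L K n s (x n) (\<lambda>t \<omega>. U t n \<omega>) (\<lambda>t \<omega>. F t n \<omega>))
   \<and> (\<forall>t\<in>{s..<T}. \<forall>a h. (\<lambda>\<omega>. Q t a \<omega> h) \<in> borel_measurable (info M Wm W s t))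
   \<and> (\<forall>t\<in>{s..<T}. \<forall>a. cost_int M (\<lambda>\<omega>. La a t (Q t a \<omega>)))
   \<and> (AE \<omega> in M. \<forall>t\<in>{s..<T}. \<forall>n h. F t n \<omega> h - (\<Sum>a\<in>UNIV. B n a * Q t a \<omega> h) = 0)"

definition Vglob where
  "Vglob M Wm W Cm T Xs g lev xlo xhi ulo uhi b L K La B s x =
     (INF UFQ \<in> {(U, F, Q). glob_adm M Wm W Cm T Xs g lev xlo xhi ulo uhi b L K La B s x U F Q}.
        ereal (\<integral>\<omega>. (\<Sum>t\<in>{s..<T}.
             (\<Sum>n\<in>UNIV. real_of_ereal (L n t
                 (ntraj (g n) s (x n) (\<lambda>r. W r n) (\<lambda>r \<omega>. fst UFQ r n \<omega>) (t - s) \<omega>)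
                 (W t n \<omega>) (fst UFQ t n \<omega>)))
             + (\<Sum>a\<in>UNIV. real_of_ereal (La a t (snd (snd UFQ) t a \<omega>))))
          + (\<Sum>n\<in>UNIV. real_of_ereal (K n
                 (ntraj (g n) s (x n) (\<lambda>r. W r n) (\<lambda>r \<omega>. fst UFQ r n \<omega>) (T - s) \<omega>))) \<partial>M))"

definition VA :: "nat \<Rightarrow> ('a::finite \<Rightarrow> nat \<Rightarrow> ('h::finite \<Rightarrow> real) \<Rightarrow> ereal) \<Rightarrow> ('n::finite \<Rightarrow> 'a \<Rightarrow> real)
    \<Rightarrow> (nat \<Rightarrow> 'n \<Rightarrow> 'h \<Rightarrow> real) \<Rightarrow> ereal" where
  "VA T La B lam = (INF q \<in> (UNIV :: (nat \<Rightarrow> 'a \<Rightarrow> 'h \<Rightarrow> real) set).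
      (\<Sum>a\<in>UNIV. \<Sum>s\<in>{0..<T}. La a s (q s a))
      - ereal (\<Sum>s\<in>{0..<T}. \<Sum>h\<in>UNIV. \<Sum>a\<in>UNIV. (\<Sum>n\<in>UNIV. B n a * lam s n h) * q s a h))"

end

theory Submission
  imports Defs
begin

text \<open>
  Weak duality. Take any globally admissible policy (U, F, Q). Its restriction to node n is
  nodally admissible, so its expected nodal price cost bounds V^n from above; and for almost
  every outcome the realised arc flows Q(\<omega>) are a feasible deterministic choice in V^A. The
  coupling F = B Q turns the arc price term \<langle>B^T \<lambda>, Q\<rangle> into \<langle>\<lambda>, F\<rangle>, which cancels the nodal
  price terms, so the nodal and arc costs add up to the global cost outcome by outcome.
\<close>

definition node_cost ::
  "nat \<Rightarrow> ('n \<Rightarrow> nat \<Rightarrow> real \<Rightarrow> 'w \<Rightarrow> 'u \<Rightarrow> real) \<Rightarrow> (nat \<Rightarrow> 'n \<Rightarrow> 'o \<Rightarrow> 'w)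
   \<Rightarrow> ('n \<Rightarrow> nat \<Rightarrow> real \<Rightarrow> 'w \<Rightarrow> 'u \<Rightarrow> ereal) \<Rightarrow> ('n \<Rightarrow> real \<Rightarrow> ereal) \<Rightarrow> 'n
   \<Rightarrow> (nat \<Rightarrow> 'h::finite \<Rightarrow> real) \<Rightarrow> nat \<Rightarrow> real \<Rightarrow> (nat \<Rightarrow> 'o \<Rightarrow> 'u) \<Rightarrow> (nat \<Rightarrow> 'o \<Rightarrow> 'h \<Rightarrow> real)
   \<Rightarrow> 'o \<Rightarrow> real" where
  "node_cost T g W L K n lam s x U F \<omega> =
     (\<Sum>t\<in>{s..<T}.
        real_of_ereal (L n t (ntraj (g n) s x (\<lambda>r. W r n) U (t - s) \<omega>) (W t n \<omega>) (U t \<omega>))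
        + hpair (lam t) (F t \<omega>))
     + real_of_ereal (K n (ntraj (g n) s x (\<lambda>r. W r n) U (T - s) \<omega>))"

definition arc_cost ::
  "nat \<Rightarrow> ('a::finite \<Rightarrow> nat \<Rightarrow> 'q \<Rightarrow> ereal) \<Rightarrow> (nat \<Rightarrow> 'n::finite \<Rightarrow> 'h::finite \<Rightarrow> real)
   \<Rightarrow> (nat \<Rightarrow> 'a \<Rightarrow> 'q) \<Rightarrow> (nat \<Rightarrow> 'n \<Rightarrow> 'h \<Rightarrow> real) \<Rightarrow> real" where
  "arc_cost T La lam q f =
     (\<Sum>a\<in>UNIV. \<Sum>s\<in>{0..<T}. real_of_ereal (La a s (q s a)))
     - (\<Sum>s\<in>{0..<T}. \<Sum>n\<in>UNIV. hpair (lam s n) (f s n))"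

definition glob_cost ::
  "nat \<Rightarrow> ('n::finite \<Rightarrow> nat \<Rightarrow> real \<Rightarrow> 'w \<Rightarrow> 'u \<Rightarrow> real) \<Rightarrow> (nat \<Rightarrow> 'n \<Rightarrow> 'o \<Rightarrow> 'w)
   \<Rightarrow> ('n \<Rightarrow> nat \<Rightarrow> real \<Rightarrow> 'w \<Rightarrow> 'u \<Rightarrow> ereal) \<Rightarrow> ('n \<Rightarrow> real \<Rightarrow> ereal)
   \<Rightarrow> ('a::finite \<Rightarrow> nat \<Rightarrow> 'q \<Rightarrow> ereal) \<Rightarrow> nat \<Rightarrow> ('n \<Rightarrow> real)
   \<Rightarrow> (nat \<Rightarrow> 'n \<Rightarrow> 'o \<Rightarrow> 'u) \<Rightarrow> (nat \<Rightarrow> 'a \<Rightarrow> 'o \<Rightarrow> 'q) \<Rightarrow> 'o \<Rightarrow> real" where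
  "glob_cost T g W L K La s x U Q \<omega> =
     (\<Sum>t\<in>{s..<T}.
        (\<Sum>n\<in>UNIV. real_of_ereal (L n t
            (ntraj (g n) s (x n) (\<lambda>r. W r n) (\<lambda>r \<omega>. U r n \<omega>) (t - s) \<omega>) (W t n \<omega>) (U t n \<omega>)))
        + (\<Sum>a\<in>UNIV. real_of_ereal (La a t (Q t a \<omega>))))
     + (\<Sum>n\<in>UNIV. real_of_ereal (K n (ntraj (g n) s (x n) (\<lambda>r. W r n) (\<lambda>r \<omega>. U r n \<omega>) (T - s) \<omega>)))"

lemma Vnode_le_node_cost:
  assumes "node_adm M Wm W Cm T Xs g lev xlo xhi ulo uhi b L K n s x U F"
  shows "Vnode M Wm W Cm T Xs g lev xlo xhi ulo uhi b L K n lam s x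
           \<le> ereal (\<integral>\<omega>. node_cost T g W L K n lam s x U F \<omega> \<partial>M)"
  unfolding Vnode_def node_cost_def using assms by (intro INF_lower2[of "(U, F)"]) auto

lemma Vglob_altdef:
  "Vglob M Wm W Cm T Xs g lev xlo xhi ulo uhi b L K La B s x =
     (INF (U, F, Q) \<in> {(U, F, Q). glob_adm M Wm W Cm T Xs g lev xlo xhi ulo uhi b L K La B s x U F Q}.
        ereal (\<integral>\<omega>. glob_cost T g W L K La s x U Q \<omega> \<partial>M))"
  unfolding Vglob_def glob_cost_def by (simp add: case_prod_beta')

lemma sum_transpose_pairing:
  fixes B :: "'n::finite \<Rightarrow> 'a::finite \<Rightarrow> real" and l :: "'n \<Rightarrow> 'h::finite \<Rightarrow> real"
  shows "(\<Sum>h\<in>UNIV. \<Sum>a\<in>UNIV. (\<Sum>n\<in>UNIV. B n a * l n h) * q a h)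
       = (\<Sum>n\<in>UNIV. hpair (l n) (\<lambda>h. \<Sum>a\<in>UNIV. B n a * q a h))"
proof -
  have "(\<Sum>h\<in>UNIV. \<Sum>a\<in>UNIV. (\<Sum>n\<in>UNIV. B n a * l n h) * q a h)
      = (\<Sum>h\<in>UNIV. \<Sum>a\<in>UNIV. \<Sum>n\<in>UNIV. l n h * (B n a * q a h))"
    unfolding sum_distrib_right by (simp add: mult_ac)
  also have "\<dots> = (\<Sum>h\<in>UNIV. \<Sum>n\<in>UNIV. \<Sum>a\<in>UNIV. l n h * (B n a * q a h))"
    by (simp add: sum.swap[of _ "UNIV::'a set"])
  also have "\<dots> = (\<Sum>n\<in>UNIV. \<Sum>h\<in>UNIV. l n h * (\<Sum>a\<in>UNIV. B n a * q a h))"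
    by (subst sum.swap) (simp add: sum_distrib_left)
  finally show ?thesis unfolding hpair_def .
qed

lemma VA_le_arc_cost:
  assumes not_PInf: "\<And>a s. s < T \<Longrightarrow> La a s (q s a) \<noteq> \<infinity>"
    and not_MInf: "\<And>a s. s < T \<Longrightarrow> La a s (q s a) \<noteq> -\<infinity>"
    and coupling: "\<And>s n h. s < T \<Longrightarrow> f s n h = (\<Sum>a\<in>UNIV. B n a * q s a h)"
  shows "VA T La B lam \<le> ereal (arc_cost T La lam q f)"
proof -
  have "(\<Sum>a\<in>UNIV. \<Sum>s\<in>{0..<T}. La a s (q s a))
      = (\<Sum>a\<in>UNIV. \<Sum>s\<in>{0..<T}. ereal (real_of_ereal (La a s (q s a))))"
  proof (intro sum.cong refl)
    fix a s assume "s \<in> {0..<T}"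
    with not_PInf[of s a] not_MInf[of s a]
    show "La a s (q s a) = ereal (real_of_ereal (La a s (q s a)))"
      by (cases "La a s (q s a)") auto
  qed
  also have "\<dots> = ereal (\<Sum>a\<in>UNIV. \<Sum>s\<in>{0..<T}. real_of_ereal (La a s (q s a)))"
    by (simp add: sum_ereal)
  finally have costs: "(\<Sum>a\<in>UNIV. \<Sum>s\<in>{0..<T}. La a s (q s a))
      = ereal (\<Sum>a\<in>UNIV. \<Sum>s\<in>{0..<T}. real_of_ereal (La a s (q s a)))" .
  have prices: "(\<Sum>s\<in>{0..<T}. \<Sum>h\<in>UNIV. \<Sum>a\<in>UNIV. (\<Sum>n\<in>UNIV. B n a * lam s n h) * q s a h)
      = (\<Sum>s\<in>{0..<T}. \<Sum>n\<in>UNIV. hpair (lam s n) (f s n))"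
  proof (intro sum.cong refl)
    fix s assume "s \<in> {0..<T}"
    then have "f s n = (\<lambda>h. \<Sum>a\<in>UNIV. B n a * q s a h)" for n
      using coupling by auto
    then show "(\<Sum>h\<in>UNIV. \<Sum>a\<in>UNIV. (\<Sum>n\<in>UNIV. B n a * lam s n h) * q s a h)
        = (\<Sum>n\<in>UNIV. hpair (lam s n) (f s n))"
      by (simp add: sum_transpose_pairing)
  qed
  show ?thesis
    unfolding VA_def arc_cost_def by (intro INF_lower2[of q]) (simp_all add: costs prices)
qed

lemma (in prob_space) ereal_le_integral_AE:
  assumes "integrable M f" and "AE \<omega> in M. c \<le> ereal (f \<omega>)"
  shows "c \<le> ereal (\<integral>\<omega>. f \<omega> \<partial>M)"
proof (cases c)
  case (real r)
  with assms show ?thesis by (simp add: integral_ge_const)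
next
  case PInf
  with assms(2) show ?thesis by simp
qed simp

lemma node_adm_integrable_node_cost:
  assumes "node_adm M Wm W Cm T Xs g lev xlo xhi ulo uhi b L K n s x U F"
  shows "integrable M (node_cost T g W L K n lam s x U F)"
  using assms unfolding node_adm_def node_cost_def[abs_def] Let_def cost_int_def hpair_def
  by (auto intro!: Bochner_Integration.integrable_add Bochner_Integration.integrable_sum
      integrable_mult_right)

lemma glob_cost_split:
  "glob_cost T g W L K La 0 x U Q \<omega>
     = (\<Sum>n\<in>UNIV. node_cost T g W L K n (\<lambda>t. lam t n) 0 (x n) (\<lambda>t \<omega>. U t n \<omega>) (\<lambda>t \<omega>. F t n \<omega>) \<omega>)
       + arc_cost T La lam (\<lambda>t a. Q t a \<omega>) (\<lambda>t n. F t n \<omega>)"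
  by (simp add: glob_cost_def node_cost_def arc_cost_def sum.distrib
      sum.swap[of _ "UNIV::'n set"] sum.swap[of _ "UNIV::'a set"])

lemma glob_adm_integrable_arc_cost:
  assumes "glob_adm M Wm W Cm T Xs g lev xlo xhi ulo uhi b L K La B 0 x U F Q"
  shows "integrable M (\<lambda>\<omega>. arc_cost T La lam (\<lambda>t a. Q t a \<omega>) (\<lambda>t n. F t n \<omega>))"
proof -
  have "integrable M (\<lambda>\<omega>. F t n \<omega> h)" if "t < T" for t n h
    using assms that unfolding glob_adm_def node_adm_def Let_def by simp
  moreover have "integrable M (\<lambda>\<omega>. real_of_ereal (La a t (Q t a \<omega>)))" if "t < T" for a t
    using assms that unfolding glob_adm_def cost_int_def by simp
  ultimately show ?thesis
    unfolding arc_cost_def hpair_def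
    by (auto intro!: Bochner_Integration.integrable_diff Bochner_Integration.integrable_sum
        integrable_mult_right)
qed

lemma integral_glob_cost_split:
  assumes "glob_adm M Wm W Cm T Xs g lev xlo xhi ulo uhi b L K La B 0 x U F Q"
  shows "(\<integral>\<omega>. glob_cost T g W L K La 0 x U Q \<omega> \<partial>M)
     = (\<Sum>n\<in>UNIV. \<integral>\<omega>. node_cost T g W L K n (\<lambda>t. lam t n) 0 (x n) (\<lambda>t \<omega>. U t n \<omega>) (\<lambda>t \<omega>. F t n \<omega>) \<omega> \<partial>M)
       + (\<integral>\<omega>. arc_cost T La lam (\<lambda>t a. Q t a \<omega>) (\<lambda>t n. F t n \<omega>) \<partial>M)"
proof -
  have "integrable M (node_cost T g W L K n (\<lambda>t. lam t n) 0 (x n) (\<lambda>t \<omega>. U t n \<omega>) (\<lambda>t \<omega>. F t n \<omega>))"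
    for n
    using assms unfolding glob_adm_def by (blast intro: node_adm_integrable_node_cost)
  moreover have "glob_cost T g W L K La 0 x U Q = (\<lambda>\<omega>.
      (\<Sum>n\<in>UNIV. node_cost T g W L K n (\<lambda>t. lam t n) 0 (x n) (\<lambda>t \<omega>. U t n \<omega>) (\<lambda>t \<omega>. F t n \<omega>) \<omega>)
      + arc_cost T La lam (\<lambda>t a. Q t a \<omega>) (\<lambda>t n. F t n \<omega>))"
    by (rule ext) (rule glob_cost_split)
  ultimately show ?thesis using glob_adm_integrable_arc_cost[OF assms]
    by (simp add: Bochner_Integration.integral_add integral_sum)
qed

lemma (in prob_space) VA_le_expected_arc_cost:
  assumes adm: "glob_adm M Wm W Cm T Xs g lev xlo xhi ulo uhi b L K La B 0 x U F Q"
    and La_not_MInf: "\<And>a t q. La a t q \<noteq> -\<infinity>"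
  shows "VA T La B lam \<le> ereal (\<integral>\<omega>. arc_cost T La lam (\<lambda>t a. Q t a \<omega>) (\<lambda>t n. F t n \<omega>) \<partial>M)"
proof (rule ereal_le_integral_AE)
  show "integrable M (\<lambda>\<omega>. arc_cost T La lam (\<lambda>t a. Q t a \<omega>) (\<lambda>t n. F t n \<omega>))"
    using adm by (rule glob_adm_integrable_arc_cost)
  have "AE \<omega> in M. \<forall>t\<in>{0..<T}. \<forall>a. La a t (Q t a \<omega>) \<noteq> \<infinity>"
    using adm unfolding glob_adm_def cost_int_def
    by (intro eventually_ball_finite ballI eventually_all_finite) auto
  moreover have "AE \<omega> in M. \<forall>t\<in>{0..<T}. \<forall>n h. F t n \<omega> h - (\<Sum>a\<in>UNIV. B n a * Q t a \<omega> h) = 0"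
    using adm unfolding glob_adm_def by blast
  ultimately show "AE \<omega> in M. VA T La B lam \<le> ereal (arc_cost T La lam (\<lambda>t a. Q t a \<omega>) (\<lambda>t n. F t n \<omega>))"
    by eventually_elim (intro VA_le_arc_cost; simp add: La_not_MInf)
qed

theorem proposition1:
  fixes M :: "'o measure"
    and T :: nat
    and src tgt :: "'a::finite \<Rightarrow> 'n::finite"
    and Wm :: "nat \<Rightarrow> 'n \<Rightarrow> 'w measure"
    and W :: "nat \<Rightarrow> 'n \<Rightarrow> 'o \<Rightarrow> 'w"
    and Cm :: "'c::order measure"
    and Xs :: "'n \<Rightarrow> nat \<Rightarrow> real set"
    and g :: "'n \<Rightarrow> nat \<Rightarrow> real \<Rightarrow> 'w \<Rightarrow> ('h::finite \<Rightarrow> 'c) \<Rightarrow> real"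
    and lev :: "'n \<Rightarrow> nat \<Rightarrow> real \<Rightarrow> 'w \<Rightarrow> ('h \<Rightarrow> 'c) \<Rightarrow> 'h \<Rightarrow> real"
    and xlo xhi :: "'n \<Rightarrow> nat \<Rightarrow> 'h \<Rightarrow> real"
    and ulo uhi :: "'n \<Rightarrow> nat \<Rightarrow> 'h \<Rightarrow> 'c"
    and b :: "'n \<Rightarrow> nat \<Rightarrow> 'w \<Rightarrow> ('h \<Rightarrow> 'c) \<Rightarrow> 'h \<Rightarrow> real"
    and L :: "'n \<Rightarrow> nat \<Rightarrow> real \<Rightarrow> 'w \<Rightarrow> ('h \<Rightarrow> 'c) \<Rightarrow> ereal"
    and La :: "'a \<Rightarrow> nat \<Rightarrow> ('h \<Rightarrow> real) \<Rightarrow> ereal"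
    and K :: "'n \<Rightarrow> real \<Rightarrow> ereal"
    and lam :: "nat \<Rightarrow> 'n \<Rightarrow> 'h \<Rightarrow> real"
    and x0 :: "'n \<Rightarrow> real"
  assumes "prob_space M"
    and "0 < T"
    and "\<And>a. src a \<noteq> tgt a"
    and "\<And>t n. W t n \<in> measurable M (Wm t n)"
    and "prob_space.indep_vars M (\<lambda>t. Pi\<^sub>M UNIV (Wm t)) (\<lambda>t \<omega>. \<lambda>n. W t n \<omega>) {0..<T}"
    and "\<And>n t. (\<lambda>(x, w, u). g n t x w u)
           \<in> borel \<Otimes>\<^sub>M Wm t n \<Otimes>\<^sub>M Pi\<^sub>M UNIV (\<lambda>_. Cm) \<rightarrow>\<^sub>M borel"
    and "\<And>n t h. (\<lambda>(x, w, u). lev n t x w u h)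
           \<in> borel \<Otimes>\<^sub>M Wm t n \<Otimes>\<^sub>M Pi\<^sub>M UNIV (\<lambda>_. Cm) \<rightarrow>\<^sub>M borel"
    and "\<And>n t h. (\<lambda>(w, u). b n t w u h) \<in> Wm t n \<Otimes>\<^sub>M Pi\<^sub>M UNIV (\<lambda>_. Cm) \<rightarrow>\<^sub>M borel"
    and "\<And>n t. (\<lambda>(x, w, u). L n t x w u)
           \<in> borel \<Otimes>\<^sub>M Wm t n \<Otimes>\<^sub>M Pi\<^sub>M UNIV (\<lambda>_. Cm) \<rightarrow>\<^sub>M borel"
    and "\<And>n t x w u. L n t x w u \<noteq> -\<infinity>"
    and "\<And>a t q. La a t q \<noteq> -\<infinity>"
    and "\<And>n. K n \<in> borel_measurable borel"
    and "\<And>n x. K n x \<noteq> -\<infinity>"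
    and "\<And>n. x0 n \<in> Xs n 0"
  shows "(\<Sum>n\<in>UNIV. Vnode M Wm W Cm T Xs g lev xlo xhi ulo uhi b L K n (\<lambda>t. lam t n) 0 (x0 n))
           + VA T La (incidence src tgt) lam
         \<le> Vglob M Wm W Cm T Xs g lev xlo xhi ulo uhi b L K La (incidence src tgt) 0 x0"
proof -
  interpret prob_space M by fact
  show ?thesis (is "?V \<le> _")
    unfolding Vglob_altdef
  proof (intro INF_greatest, clarify)
    fix U F Q
    assume adm: "glob_adm M Wm W Cm T Xs g lev xlo xhi ulo uhi b L K La (incidence src tgt) 0 x0 U F Q"
    then have "node_adm M Wm W Cm T Xs g lev xlo xhi ulo uhi b L K n 0 (x0 n)
        (\<lambda>t \<omega>. U t n \<omega>) (\<lambda>t \<omega>. F t n \<omega>)" for n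
      unfolding glob_adm_def by blast
    then have "?V \<le> (\<Sum>n\<in>UNIV. ereal (\<integral>\<omega>. node_cost T g W L K n (\<lambda>t. lam t n) 0 (x0 n)
             (\<lambda>t \<omega>. U t n \<omega>) (\<lambda>t \<omega>. F t n \<omega>) \<omega> \<partial>M))
        + ereal (\<integral>\<omega>. arc_cost T La lam (\<lambda>t a. Q t a \<omega>) (\<lambda>t n. F t n \<omega>) \<partial>M)"
      using adm assms(11)
      by (intro add_mono sum_mono Vnode_le_node_cost VA_le_expected_arc_cost)
    also have "\<dots> = ereal (\<integral>\<omega>. glob_cost T g W L K La 0 x0 U Q \<omega> \<partial>M)"
      using integral_glob_cost_split[OF adm] by (simp add: sum_ereal)
    finally show "?V \<le> ereal (\<integral>\<omega>. glob_cost T g W L K La 0 x0 U Q \<omega> \<partial>M)" .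
  qed
qed

end
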